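(* Let $m\ge0$, $r>0$, $\gamma>0$ and $0<\alpha<\pi/2$. If $$r\le\sqrt{\frac{\pi(\pi-2\alpha)}{4\alpha^2 m\gamma}},$$ then for all $0\le\tau<\alpha mr$, all $d\ge0$ and all $\omega>0$, $$\mathrm{Re}\left(\Big(\pi+\frac{2j(\pi-\alpha)}{\alpha}\Big)\left(1+\frac{\gamma}{j\omega\big(mj\omega+d+\tfrac1re^{-j\omega\tau}\big)}\right)\right)>0.$$
   Context: $j$ denotes the imaginary unit. *)

theory Defs
  imports Complex_Main
begin

end

theory Submission
  imports Defs "HOL-Analysis.Analysis"
begin

text \<open>
  Write z for the denominator and b = 2(pi - alpha)/alpha. The real part in question is positive iff
  pi |z|^2 + gamma (pi Re z + b Im z) > 0. In the variables u = m r omega, phi = omega tau, delta = d r and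
  u0 = pi/(2 alpha) we have b = 4 u0 - 2, the delay bound reads phi < pi u/(2 u0), and the hypothesis on r
  says m gamma r^2 \<le> u0 (u0 - 1); in the extremal case of equality the claim becomes positivity of a
  polynomial in u, sin phi and cos phi + delta. Above the crossover frequency u0 the real part of z
  contributes positively, and a negative imaginary part needs phi > pi/2, which costs only linearly in
  u - u0. Below it phi < pi/2: the bound sin x \<ge> x - x^3/6 handles the range 2 u^2 \<ge> u0 (u0 - 1),
  and cos x \<ge> 1 - x^2/2 reduces the remaining range to a cubic inequality, settled by completing the
  square and pi^2 < 9.87.
\<close>

lemma sin_ge_cubic:
  fixes x :: real
  assumes "0 \<le> x"
  shows "x - x^3/6 \<le> sin x"
proof -
  have "\<bar>sin x - (\<Sum>m<3. sin_coeff m * x ^ m)\<bar> \<le> inverse (fact 3) * \<bar>x\<bar> ^ 3"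
    by (rule Maclaurin_sin_bound)
  moreover have "(\<Sum>m<3. sin_coeff m * x ^ m) = x"
    by (simp add: eval_nat_numeral sin_coeff_def)
  ultimately have "\<bar>sin x - x\<bar> \<le> x^3/6"
    using assms by (simp add: field_simps fact_numeral)
  thus ?thesis by linarith
qed

lemma cos_ge_quadratic:
  fixes x :: real
  shows "1 - x^2/2 \<le> cos x"
proof -
  have "cos x = 1 - 2 * sin (x/2) ^ 2"
    using cos_double_sin[of "x/2"] by simp
  moreover have "sin (x/2) ^ 2 \<le> (x/2) ^ 2"
    by (metis abs_sin_x_le_abs_x power2_abs power_mono abs_ge_zero)
  ultimately show ?thesis by (simp add: power_divide)
qed

lemma minus_cos_le:
  fixes x :: real
  assumes "pi/2 \<le> x"
  shows "- cos x \<le> x - pi/2"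
  using sin_x_le_x[of "x - pi/2"] assms by (simp add: sin_diff)

lemma pi_squared_less: "pi^2 < (987/100 :: real)"
proof -
  have "pi^2 \<le> (3.1415926535899 :: real)^2"
    using pi_approx(2) pi_gt_zero by (intro power_mono) auto
  also have "\<dots> < 987/100" by (simp add: power2_eq_square)
  finally show ?thesis .
qed

lemma cubic_discriminant_bound:
  fixes v :: real
  assumes "0 \<le> v" and "v^2 < 5/4" and "1 < v + v^2/2"
  shows "pi^2 * (v + v^2/2 - 1)^2 \<le> 16 * (1 - v^2/2) * v^3"
proof (cases "v \<le> 1")
  case True
  have "v^2 \<le> 1" using True assms(1) by (simp add: power_le_one)
  have "v \<ge> 73/100"
  proof (rule ccontr)
    assume "\<not> v \<ge> 73/100"
    hence "v^2 \<le> (73/100)^2" using assms(1) by (intro power_mono) auto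
    thus False using assms(3) \<open>\<not> v \<ge> 73/100\<close> by (simp add: power2_eq_square)
  qed
  hence "(73/100)^3 \<le> v^3" by (intro power_mono) auto
  hence "16 * (1/2) * (73/100)^3 \<le> 16 * (1 - v^2/2) * v^3"
    using \<open>v^2 \<le> 1\<close> by (intro mult_mono) auto
  moreover have "(v + v^2/2 - 1)^2 \<le> (1/2)^2"
    using True \<open>v^2 \<le> 1\<close> assms(3) by (intro power_mono) auto
  hence "pi^2 * (v + v^2/2 - 1)^2 \<le> (987/100) * (1/2)^2"
    using pi_squared_less by (intro mult_mono) auto
  moreover have "(987/100) * (1/2)^2 \<le> 16 * (1/2) * (73/100::real)^3"
    by (simp add: power2_eq_square power3_eq_cube)
  ultimately show ?thesis by linarith
next
  case False
  have "v < 112/100"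
  proof (rule ccontr)
    assume "\<not> v < 112/100"
    hence "(112/100)^2 \<le> v^2" by (intro power_mono) auto
    thus False using assms(2) by (simp add: power2_eq_square)
  qed
  hence "(v + v^2/2 - 1)^2 \<le> (745/1000)^2"
    using assms(2,3) by (intro power_mono) auto
  hence "pi^2 * (v + v^2/2 - 1)^2 \<le> (987/100) * (745/1000)^2"
    using pi_squared_less by (intro mult_mono) auto
  moreover have "16 * (3/8) * 1 \<le> 16 * (1 - v^2/2) * v^3"
    using False assms(2) by (intro mult_mono) (auto simp: power_le_one_iff)
  ultimately show ?thesis by (simp add: power2_eq_square)
qed

lemma cubic_nonneg:
  fixes p v :: real
  assumes "0 < p" and "p < pi" and "0 \<le> v" and "8 * v^2 < pi * p"
  shows "0 \<le> 4 * v^3 - pi * p * v + (pi + p) * p * (1 - v^2/2)"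
proof -
  define A where "A = 1 - v^2/2"
  define B where "B = pi * (1 - v - v^2/2)"
  have "pi * p < pi^2" using assms(2) by (simp add: power2_eq_square)
  hence v2: "v^2 < 5/4" using pi_squared_less assms(4) by linarith
  hence A0: "0 < A" by (simp add: A_def)
  have quadratic: "4 * v^3 - pi * p * v + (pi + p) * p * (1 - v^2/2) = A * p^2 + B * p + 4 * v^3"
    by (simp add: A_def B_def algebra_simps power2_eq_square power3_eq_cube)
  show ?thesis
  proof (cases "0 \<le> B")
    case True
    thus ?thesis unfolding quadratic using A0 assms(1,3) by simp
  next
    case False
    hence "1 < v + v^2/2" unfolding B_def by (simp add: zero_le_mult_iff)
    hence "B^2 \<le> 16 * A * v^3"
      using cubic_discriminant_bound[OF assms(3) v2]
      by (simp add: A_def B_def power_mult_distrib algebra_simps power2_eq_square)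
    moreover have "4 * A * (A * p^2 + B * p + 4 * v^3) = (2 * A * p + B)^2 + (16 * A * v^3 - B^2)"
      by (simp add: algebra_simps power2_eq_square)
    ultimately have "0 \<le> 4 * A * (A * p^2 + B * p + 4 * v^3)" by simp
    thus ?thesis unfolding quadratic using A0 by (simp add: zero_le_mult_iff)
  qed
qed

lemma crossover_polynomial_bound:
  fixes u0 w :: real
  assumes "1 < u0" and "0 \<le> w" and "w \<le> u0 - 1"
  shows "(u0 - w - 1) * (2 * u0 - w - 1) \<le> (u0 - 1) * (2 * u0 - 1) * (1 - (pi * w / (2 * u0))^2 / 6)"
proof -
  have "(u0 - 1) * w \<le> u0^2"
    using assms by (intro mult_mono[of _ u0 _ u0, simplified power2_eq_square[symmetric]]) auto
  have "(u0 - 1) * (2 * u0 - 1) * (pi * w / (2 * u0))^2 / 6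
      = pi^2 / 24 * ((2 * u0 - 1) * w) * ((u0 - 1) * w / u0^2)"
    using assms(1) by (simp add: field_simps power2_eq_square)
  also have "\<dots> \<le> pi^2 / 24 * ((2 * u0 - 1) * w)"
    using assms \<open>(u0 - 1) * w \<le> u0^2\<close> by (intro mult_right_le_one_le) auto
  also have "\<dots> \<le> (2 * u0 - 1) * w"
    using pi_squared_less assms by (intro mult_left_le_one_le) auto
  finally have "(u0 - 1) * (2 * u0 - 1) * (pi * w / (2 * u0))^2 / 6 \<le> (2 * u0 - 1) * w" .
  moreover have "w^2 \<le> w * (u0 - 1)"
    using assms by (simp add: power2_eq_square mult_left_mono)
  moreover have "(u0 - w - 1) * (2 * u0 - w - 1) = (u0 - 1) * (2 * u0 - 1) - w * (u0 - 1) - (2 * u0 - 1) * w + w^2"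
    by (simp add: algebra_simps power2_eq_square)
  moreover have "(u0 - 1) * (2 * u0 - 1) * (1 - (pi * w / (2 * u0))^2 / 6)
      = (u0 - 1) * (2 * u0 - 1) - (u0 - 1) * (2 * u0 - 1) * (pi * w / (2 * u0))^2 / 6"
    by (simp add: field_simps)
  ultimately show ?thesis by linarith
qed

lemma crossover_cos_bound:
  fixes u0 u \<phi> :: real
  assumes "1 < u0" and "0 < u" and "u \<le> u0" and "0 \<le> \<phi>" and "\<phi> < pi * u / (2 * u0)"
  shows "pi * (u - 1) * (u0 - u) * (u + u0 - 1) < 2 * u0 * (u0 - 1) * (2 * u0 - 1) * cos \<phi>"
proof -
  have "pi * u / (2 * u0) \<le> pi / 2"
    using assms(1,3) by (simp add: field_simps)
  hence "0 < cos \<phi>" using assms(4,5) by (intro cos_gt_zero_pi) auto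
  show ?thesis
  proof (cases "u \<le> 1")
    case True
    have "(u - 1) * ((u0 - u) * (u + u0 - 1)) \<le> 0"
      using True assms by (intro mult_nonpos_nonneg) auto
    hence "pi * (u - 1) * (u0 - u) * (u + u0 - 1) \<le> 0"
      by (simp add: mult_nonneg_nonpos mult.assoc)
    moreover have "0 < 2 * u0 * (u0 - 1) * (2 * u0 - 1) * cos \<phi>"
      using assms(1) \<open>0 < cos \<phi>\<close> by simp
    ultimately show ?thesis by linarith
  next
    case False
    define w where "w = u0 - u"
    define e where "e = pi * w / (2 * u0)"
    have w: "0 \<le> w" "w \<le> u0 - 1" using assms(3) False by (auto simp: w_def)
    have "0 \<le> e" using w assms(1) by (simp add: e_def)
    have "pi * u / (2 * u0) = pi/2 - e"
      using assms(1) by (simp add: e_def w_def field_simps)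
    hence "cos (pi * u / (2 * u0)) = sin e" by (simp add: cos_diff)
    moreover have "cos (pi * u / (2 * u0)) < cos \<phi>"
      using assms(4,5) \<open>pi * u / (2 * u0) \<le> pi / 2\<close> \<open>0 \<le> e\<close> \<open>_ = pi/2 - e\<close>
      by (subst cos_mono_less_eq) auto
    ultimately have "sin e < cos \<phi>" by simp
    hence "2 * u0 * (u0 - 1) * (2 * u0 - 1) * (e - e^3/6)
        < 2 * u0 * (u0 - 1) * (2 * u0 - 1) * cos \<phi>"
      using sin_ge_cubic[OF \<open>0 \<le> e\<close>] assms(1) by (intro mult_strict_left_mono) auto
    moreover have "2 * u0 * (u0 - 1) * (2 * u0 - 1) * (e - e^3/6)
        = pi * w * ((u0 - 1) * (2 * u0 - 1) * (1 - e^2/6))"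
      using assms(1) by (simp add: e_def field_simps power2_eq_square power3_eq_cube)
    moreover have "pi * w * ((u - 1) * (u + u0 - 1)) \<le> pi * w * ((u0 - 1) * (2 * u0 - 1) * (1 - e^2/6))"
      using crossover_polynomial_bound[OF assms(1) w] w by (intro mult_left_mono) (auto simp: w_def e_def ac_simps)
    ultimately show ?thesis by (simp add: w_def algebra_simps)
  qed
qed

lemma small_freq_bound:
  fixes u0 u \<phi> :: real
  assumes "1 < u0" and "0 < u" and "2 * u^2 < u0 * (u0 - 1)" and "0 \<le> \<phi>" and "\<phi> < pi * u / (2 * u0)"
  shows "0 < pi * (u^3 + u - u0 * (u0 - 1) * u) + 2 * u0 * (u0 - 1) * (2 * u0 - 1) * cos \<phi>"
proof -
  define v where "v = pi * u / (2 * u0)"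
  define p where "p = pi * (u0 - 1) / u0"
  have "\<phi>^2 \<le> v^2" using assms(4,5) by (intro power_mono) (auto simp: v_def)
  hence "1 - v^2/2 \<le> cos \<phi>" using cos_ge_quadratic[of \<phi>] by linarith
  hence "2 * u0 * (u0 - 1) * (2 * u0 - 1) * (1 - v^2/2) \<le> 2 * u0 * (u0 - 1) * (2 * u0 - 1) * cos \<phi>"
    using assms(1) by (intro mult_left_mono) auto
  moreover have "0 \<le> 2 * u0^3 / pi^2 * (4 * v^3 - pi * p * v + (pi + p) * p * (1 - v^2/2))"
  proof (intro mult_nonneg_nonneg cubic_nonneg)
    show "0 \<le> 2 * u0^3 / pi^2" using assms(1) by simp
    show "0 < p" "p < pi" "0 \<le> v" using assms(1,2) by (auto simp: p_def v_def field_simps)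
    have "pi^2 * (2 * u^2) < pi^2 * (u0 * (u0 - 1))" using assms(3) by simp
    thus "8 * v^2 < pi * p"
      using assms(1) by (simp add: v_def p_def field_simps power2_eq_square)
  qed
  moreover have "pi * (u^3 - u0 * (u0 - 1) * u) + 2 * u0 * (u0 - 1) * (2 * u0 - 1) * (1 - v^2/2)
      = 2 * u0^3 / pi^2 * (4 * v^3 - pi * p * v + (pi + p) * p * (1 - v^2/2))"
    using assms(1) by (simp add: v_def p_def field_simps power2_eq_square power3_eq_cube)
  moreover have "pi * (u^3 + u - u0 * (u0 - 1) * u) = pi * (u^3 - u0 * (u0 - 1) * u) + pi * u"
    by (simp add: algebra_simps)
  moreover have "0 < pi * u" using assms(2) by simp
  ultimately show ?thesis by linarith
qed

text \<open>
  The form pi |z|^2 + gamma (pi Re z + b Im z) in the variables u, phi, delta, scaled by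
  u0 (u0 - 1) r/(gamma omega) and taken at the extremal gain m gamma r^2 = u0 (u0 - 1).
\<close>
definition margin :: "real \<Rightarrow> real \<Rightarrow> real \<Rightarrow> real \<Rightarrow> real" where
  "margin u0 u \<phi> \<delta> = pi * u * ((u - sin \<phi>)^2 + (cos \<phi> + \<delta>)^2)
     - pi * u0 * (u0 - 1) * (u - sin \<phi>) + 2 * u0 * (u0 - 1) * (2 * u0 - 1) * (cos \<phi> + \<delta>)"

lemma minus_cos_lt_beyond_crossover:
  fixes u0 u \<phi> \<delta> :: real
  assumes "0 < u0" and "0 \<le> \<phi>" and "\<phi> < pi * u / (2 * u0)" and "0 \<le> \<delta>" and "cos \<phi> + \<delta> < 0"
  shows "- (cos \<phi> + \<delta>) < pi * (u - u0) / (2 * u0)"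
proof -
  have "pi/2 < \<phi>"
  proof (rule ccontr)
    assume "\<not> pi/2 < \<phi>"
    hence "0 \<le> cos \<phi>" using assms(2) by (intro cos_ge_zero) auto
    thus False using assms(4,5) by linarith
  qed
  moreover have "pi * u / (2 * u0) - pi/2 = pi * (u - u0) / (2 * u0)"
    using assms(1) by (simp add: field_simps)
  ultimately show ?thesis using minus_cos_le[of \<phi>] assms(3,4) by linarith
qed

lemma margin_pos_high_freq:
  fixes u0 u \<phi> \<delta> :: real
  assumes "1 < u0" and "u0 < u" and "0 \<le> \<phi>" and "\<phi> < pi * u / (2 * u0)" and "0 \<le> \<delta>"
  shows "0 < margin u0 u \<phi> \<delta>"
proof -
  define s c K where "s = sin \<phi>" and "c = cos \<phi>" and "K = u0 * (u0 - 1)"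
  have margin_eq: "margin u0 u \<phi> \<delta>
      = pi * (u - 1) * ((u - u0) * (u + u0 - 1)) + pi * u * (c + \<delta>)^2 + 2 * K * (2 * u0 - 1) * (c + \<delta>)
        + pi * ((u - s) * (u * (u - s) - K) - (u - 1) * ((u - u0) * (u + u0 - 1)))"
    by (simp add: margin_def s_def c_def K_def algebra_simps power2_eq_square)
  have "s \<le> 1" by (simp add: s_def)
  have "u * (u - 1) \<le> u * (u - s)" using \<open>s \<le> 1\<close> assms(1,2) by (intro mult_left_mono) auto
  moreover have "u * (u - 1) - K = (u - u0) * (u + u0 - 1)" by (simp add: K_def algebra_simps)
  ultimately have "(u - u0) * (u + u0 - 1) \<le> u * (u - s) - K" by linarith
  hence "(u - 1) * ((u - u0) * (u + u0 - 1)) \<le> (u - s) * (u * (u - s) - K)"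
    using \<open>s \<le> 1\<close> assms(1,2) by (intro mult_mono) auto
  hence "0 \<le> pi * ((u - s) * (u * (u - s) - K) - (u - 1) * ((u - u0) * (u + u0 - 1)))" by simp
  moreover have "0 < pi * (u - 1) * ((u - u0) * (u + u0 - 1))" using assms(1,2) by simp
  moreover have "0 \<le> pi * u * (c + \<delta>)^2" using assms(1,2) by simp
  moreover have "0 < pi * (u - 1) * ((u - u0) * (u + u0 - 1)) + 2 * K * (2 * u0 - 1) * (c + \<delta>)"
  proof (cases "0 \<le> c + \<delta>")
    case True
    have "0 \<le> 2 * K * (2 * u0 - 1) * (c + \<delta>)" using True assms(1) by (simp add: K_def)
    moreover have "0 < pi * (u - 1) * ((u - u0) * (u + u0 - 1))" using assms(1,2) by simp
    ultimately show ?thesis by linarith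
  next
    case False
    hence "- (c + \<delta>) < pi * (u - u0) / (2 * u0)"
      using minus_cos_lt_beyond_crossover assms(1,3,4,5) by (simp add: c_def)
    hence "2 * K * (2 * u0 - 1) * (- pi * (u - u0) / (2 * u0)) < 2 * K * (2 * u0 - 1) * (c + \<delta>)"
      using assms(1,5) by (intro mult_strict_left_mono) (auto simp: K_def)
    moreover have "2 * K * (2 * u0 - 1) * (- pi * (u - u0) / (2 * u0))
        = - (pi * (u - u0) * ((u0 - 1) * (2 * u0 - 1)))"
      using assms(1) by (simp add: K_def field_simps)
    moreover have "(u0 - 1) * (2 * u0 - 1) \<le> (u - 1) * (u + u0 - 1)"
      using assms(1,2) by (intro mult_mono) auto
    hence "pi * (u - u0) * ((u0 - 1) * (2 * u0 - 1)) \<le> pi * (u - u0) * ((u - 1) * (u + u0 - 1))"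
      using assms(2) by (intro mult_left_mono) auto
    ultimately show ?thesis by (simp add: algebra_simps)
  qed
  ultimately show ?thesis unfolding margin_eq by linarith
qed

lemma margin_mono_delta:
  fixes u0 u \<phi> \<delta> :: real
  assumes "1 \<le> u0" and "0 \<le> u" and "0 \<le> cos \<phi>" and "0 \<le> \<delta>"
  shows "margin u0 u \<phi> 0 \<le> margin u0 u \<phi> \<delta>"
proof -
  have "(cos \<phi>)^2 \<le> (cos \<phi> + \<delta>)^2" using assms(3,4) by (intro power_mono) auto
  hence "pi * u * ((u - sin \<phi>)^2 + (cos \<phi>)^2) \<le> pi * u * ((u - sin \<phi>)^2 + (cos \<phi> + \<delta>)^2)"
    using assms(2) by (intro mult_left_mono) auto
  moreover have "2 * u0 * (u0 - 1) * (2 * u0 - 1) * cos \<phi> \<le> 2 * u0 * (u0 - 1) * (2 * u0 - 1) * (cos \<phi> + \<delta>)"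
    using assms(1,4) by (intro mult_left_mono) auto
  ultimately show ?thesis unfolding margin_def add_0_right by linarith
qed

lemma margin_pos_low_freq:
  fixes u0 u \<phi> \<delta> :: real
  assumes "1 < u0" and "0 < u" and "u \<le> u0" and "0 \<le> \<phi>" and "\<phi> < pi * u / (2 * u0)" and "0 \<le> \<delta>"
  shows "0 < margin u0 u \<phi> \<delta>"
proof -
  define s c K where "s = sin \<phi>" and "c = cos \<phi>" and "K = u0 * (u0 - 1)"
  have "pi * u / (2 * u0) \<le> pi / 2"
    using assms(1,3) by (simp add: field_simps)
  hence "\<phi> < pi/2" using assms(5) by linarith
  hence "0 < c" "0 \<le> s" using assms(4) by (auto simp: c_def s_def intro!: cos_gt_zero_pi sin_ge_zero)
  have "margin u0 u \<phi> 0 \<le> margin u0 u \<phi> \<delta>"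
    using margin_mono_delta \<open>0 < c\<close> assms(1,2,6) by (simp add: c_def)
  moreover have "margin u0 u \<phi> 0
      = pi * (u^3 + u - K * u) + pi * s * (K - 2 * u^2) + 2 * K * (2 * u0 - 1) * c"
    using sin_cos_squared_add[of \<phi>]
    by (simp add: margin_def s_def c_def K_def algebra_simps power2_eq_square power3_eq_cube)
  moreover have "0 < pi * (u^3 + u - K * u) + pi * s * (K - 2 * u^2) + 2 * K * (2 * u0 - 1) * c"
  proof (cases "K \<le> 2 * u^2")
    case True
    have "pi * 1 * (K - 2 * u^2) \<le> pi * s * (K - 2 * u^2)"
      using True by (intro mult_right_mono_neg) (auto simp: s_def)
    moreover have "pi * (u^3 + u - K * u) + pi * 1 * (K - 2 * u^2) = - (pi * (u - 1) * (u0 - u) * (u + u0 - 1))"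
      by (simp add: K_def algebra_simps power2_eq_square power3_eq_cube)
    ultimately show ?thesis
      using crossover_cos_bound[OF assms(1-5)] unfolding K_def c_def mult.assoc by linarith
  next
    case False
    have "0 \<le> pi * s * (K - 2 * u^2)" using False \<open>0 \<le> s\<close> by simp
    thus ?thesis
      using small_freq_bound[OF assms(1,2) _ assms(4,5)] False unfolding K_def c_def mult.assoc
      by linarith
  qed
  ultimately show ?thesis by linarith
qed

lemma margin_pos:
  fixes u0 u \<phi> \<delta> :: real
  assumes "1 < u0" and "0 < u" and "0 \<le> \<phi>" and "\<phi> < pi * u / (2 * u0)" and "0 \<le> \<delta>"
  shows "0 < margin u0 u \<phi> \<delta>"
  using margin_pos_high_freq[OF assms(1) _ assms(3-5)] margin_pos_low_freq[OF assms(1,2) _ assms(3-5)]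
  by fastforce

lemma quadratic_form_pos_of_margin:
  fixes u0 m r \<gamma> \<omega> \<phi> d :: real
  assumes "0 < m" and "0 < r" and "0 < \<gamma>" and "0 < \<omega>"
    and "m * \<gamma> * r^2 \<le> u0 * (u0 - 1)" and "0 < margin u0 (m * r * \<omega>) \<phi> (d * r)"
  defines "x \<equiv> - m * \<omega>^2 + \<omega> / r * sin \<phi>" and "y \<equiv> \<omega> * d + \<omega> / r * cos \<phi>"
  shows "0 < pi * (x^2 + y^2) + \<gamma> * (pi * x + (4 * u0 - 2) * y)"
proof -
  define K k W where "K = u0 * (u0 - 1)" and "k = \<omega> / r"
    and "W = (m * r * \<omega> - sin \<phi>)^2 + (cos \<phi> + d * r)^2"
  have "x^2 + y^2 = k^2 * W"
    using assms(2) by (simp add: x_def y_def k_def W_def field_simps power2_eq_square)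
  hence "K * (pi * (x^2 + y^2) + \<gamma> * (pi * x + (4 * u0 - 2) * y))
      = \<gamma> * k * margin u0 (m * r * \<omega>) \<phi> (d * r) + pi * W * k^2 * (K - m * \<gamma> * r^2)"
    using assms(2) by (simp add: margin_def x_def y_def K_def k_def W_def field_simps power2_eq_square)
  moreover have "0 < \<gamma> * k * margin u0 (m * r * \<omega>) \<phi> (d * r)"
    using assms(2-4,6) by (simp add: k_def)
  moreover have "0 \<le> pi * W * k^2 * (K - m * \<gamma> * r^2)"
    using assms(5) by (simp add: K_def W_def)
  ultimately have "0 < K * (pi * (x^2 + y^2) + \<gamma> * (pi * x + (4 * u0 - 2) * y))" by linarith
  moreover have "0 < m * \<gamma> * r^2" using assms(1-3) by simp
  hence "0 \<le> K" using assms(5) by (simp add: K_def)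
  ultimately show ?thesis by (simp add: zero_less_mult_iff)
qed

lemma Re_mult_one_plus_divide_pos:
  fixes a z :: complex and g :: real
  assumes "0 < Re a * ((Re z)^2 + (Im z)^2) + g * (Re a * Re z + Im a * Im z)"
  shows "0 < Re (a * (1 + of_real g / z))"
proof -
  define n where "n = (Re z)^2 + (Im z)^2"
  have "z \<noteq> 0" using assms by auto
  hence "0 < n" by (simp add: n_def complex_neq_0)
  have "Re (a * (1 + of_real g / z)) = Re a + Re (of_real g * a / z)"
    by (simp add: distrib_left mult.commute)
  also have "\<dots> = Re a + g * (Re a * Re z + Im a * Im z) / n"
    by (simp add: Re_divide n_def algebra_simps)
  also have "\<dots> = (Re a * n + g * (Re a * Re z + Im a * Im z)) / n"
    using \<open>0 < n\<close> by (simp add: field_simps)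
  finally show ?thesis using assms \<open>0 < n\<close> by (simp add: n_def)
qed

lemma gain_bound_of_radius_bound:
  fixes m r \<gamma> \<alpha> :: real
  assumes "0 \<le> m" and "0 < r" and "0 < \<gamma>" and "0 < \<alpha>"
    and "r \<le> sqrt (pi * (pi - 2 * \<alpha>) / (4 * \<alpha>^2 * m * \<gamma>))"
  shows "0 < m" and "m * \<gamma> * r^2 \<le> pi / (2 * \<alpha>) * (pi / (2 * \<alpha>) - 1)"
proof -
  define Q where "Q = pi * (pi - 2 * \<alpha>) / (4 * \<alpha>^2 * m * \<gamma>)"
  have "0 < Q" using assms(2,5) Q_def by (metis real_sqrt_le_0_iff not_le order.strict_trans2)
  thus "0 < m" using assms(1) by (cases "m = 0") (auto simp: Q_def)
  have "r^2 \<le> (sqrt Q)^2" using assms(2,5) by (intro power_mono) (auto simp: Q_def)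
  hence "r^2 \<le> Q" using \<open>0 < Q\<close> by simp
  thus "m * \<gamma> * r^2 \<le> pi / (2 * \<alpha>) * (pi / (2 * \<alpha>) - 1)"
    using \<open>0 < m\<close> assms(3,4) by (simp add: Q_def field_simps power2_eq_square)
qed

lemma Re_Im_delay_denominator:
  fixes m d r \<omega> \<tau> :: real
  defines "z \<equiv> \<i> * complex_of_real \<omega> * (complex_of_real m * \<i> * complex_of_real \<omega> + complex_of_real d
    + complex_of_real (1 / r) * exp (- \<i> * complex_of_real (\<omega> * \<tau>)))"
  shows "Re z = - m * \<omega>^2 + \<omega> / r * sin (\<omega> * \<tau>)" and "Im z = \<omega> * d + \<omega> / r * cos (\<omega> * \<tau>)"
proof -
  have "exp (- \<i> * complex_of_real (\<omega> * \<tau>)) = cis (- (\<omega> * \<tau>))"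
    by (simp add: cis_conv_exp)
  thus "Re z = - m * \<omega>^2 + \<omega> / r * sin (\<omega> * \<tau>)" "Im z = \<omega> * d + \<omega> / r * cos (\<omega> * \<tau>)"
    unfolding z_def by (simp_all add: power2_eq_square field_simps)
qed

theorem mainTheorem12:
  fixes m r \<gamma> \<alpha> :: real
  assumes "m \<ge> 0" and "r > 0" and "\<gamma> > 0"
    and "0 < \<alpha>" and "\<alpha> < pi / 2"
    and "r \<le> sqrt (pi * (pi - 2 * \<alpha>) / (4 * \<alpha>^2 * m * \<gamma>))"
  shows "\<forall>\<tau> d \<omega> :: real. 0 \<le> \<tau> \<and> \<tau> < \<alpha> * m * r \<and> d \<ge> 0 \<and> \<omega> > 0 \<longrightarrow>
    Re ((complex_of_real pi + 2 * \<i> * complex_of_real ((pi - \<alpha>) / \<alpha>)) *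
        (1 + complex_of_real \<gamma> /
           (\<i> * complex_of_real \<omega> *
             (complex_of_real m * \<i> * complex_of_real \<omega> + complex_of_real d
              + complex_of_real (1 / r) * exp (- \<i> * complex_of_real (\<omega> * \<tau>)))))) > 0"
proof (intro allI impI)
  fix \<tau> d \<omega> :: real
  assume "0 \<le> \<tau> \<and> \<tau> < \<alpha> * m * r \<and> d \<ge> 0 \<and> \<omega> > 0"
  hence \<tau>: "0 \<le> \<tau>" "\<tau> < \<alpha> * m * r" and "0 \<le> d" "0 < \<omega>" by auto
  define u0 where "u0 = pi / (2 * \<alpha>)"
  have "1 < u0" using assms(4,5) by (simp add: u0_def field_simps)
  have "0 < m" and "m * \<gamma> * r^2 \<le> u0 * (u0 - 1)"
    using gain_bound_of_radius_bound[OF assms(1-4,6)] by (simp_all add: u0_def)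
  moreover have "0 < margin u0 (m * r * \<omega>) (\<omega> * \<tau>) (d * r)"
  proof (rule margin_pos)
    show "\<omega> * \<tau> < pi * (m * r * \<omega>) / (2 * u0)"
      using \<tau>(2) \<open>0 < \<omega>\<close> assms(4) by (simp add: u0_def field_simps)
  qed (use \<open>1 < u0\<close> \<open>0 < m\<close> assms(2) \<tau>(1) \<open>0 \<le> d\<close> \<open>0 < \<omega>\<close> in auto)
  ultimately have "0 < pi * ((- m * \<omega>^2 + \<omega> / r * sin (\<omega> * \<tau>))^2 + (\<omega> * d + \<omega> / r * cos (\<omega> * \<tau>))^2)
      + \<gamma> * (pi * (- m * \<omega>^2 + \<omega> / r * sin (\<omega> * \<tau>)) + (4 * u0 - 2) * (\<omega> * d + \<omega> / r * cos (\<omega> * \<tau>)))"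
    using quadratic_form_pos_of_margin \<open>0 < m\<close> assms(2,3) \<open>0 < \<omega>\<close> by blast
  moreover have "2 * ((pi - \<alpha>) / \<alpha>) = 4 * u0 - 2" using assms(4) by (simp add: u0_def field_simps)
  ultimately show "Re ((complex_of_real pi + 2 * \<i> * complex_of_real ((pi - \<alpha>) / \<alpha>)) *
      (1 + complex_of_real \<gamma> / (\<i> * complex_of_real \<omega> * (complex_of_real m * \<i> * complex_of_real \<omega>
        + complex_of_real d + complex_of_real (1 / r) * exp (- \<i> * complex_of_real (\<omega> * \<tau>)))))) > 0"
    by (intro Re_mult_one_plus_divide_pos, unfold Re_Im_delay_denominator) simp
qed

end
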